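(* Let $\sigma : X^+ \to S$ be a semigroup choice of generators for a semigroup $S$ and $u, v \in X^+$; then $u\sigma = v\sigma$ if and only if $u\overline{v} \in L_\sigma(S)$. Similarly, if $\sigma : X^* \to M$ is a monoid choice of generators for a monoid $M$ and $u, v \in X^*$, then $u\sigma = v\sigma$ if and only if $u\overline{v} \in L_\sigma(M)$.
   Context: Maps are written on the right. $X^*$, $X^+$: free monoid and free semigroup on $X$. Let $\overline{X} = \{\overline{x} : x \in X\}$ be new symbols, $\hat{X} = X \cup \overline{X}$, with $\overline{x_1\cdots x_n} = \overline{x_n}\cdots\overline{x_1}$ for $x_i \in X$. For a monoid $M$ and surjective monoid morphism $\sigma : X^* \to M$, the loop automaton has vertex set $M$, for each $a \in M$, $x \in X$ an edge $a \to a(x\sigma)$ labelled $x$ and an edge $a(x\sigma) \to a$ labelled $\overline{x}$; the loop problem $L_\sigma(M)$ is the set of labels of paths from the identity to the identity. For a semigroup $S$ and surjective morphism $\sigma : X^+ \to S$, $L_\sigma(S)$ is the loop problem of $S^1$ ($S$ with a new identity adjoined, even if one exists) with respect to the unique extension $\sigma^1 : X^* \to S^1$. *)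

theory Defs
  imports Main
begin

text \<open>Letters of hat X = X \<union> overline X.\<close>
datatype 'x hat = Pos 'x | Neg 'x

fun bar_letter :: "'x hat \<Rightarrow> 'x hat" where
  "bar_letter (Pos x) = Neg x"
| "bar_letter (Neg x) = Pos x"

definition bar :: "'x list \<Rightarrow> 'x hat list" where
  "bar w = rev (map Neg w)"

text \<open>Monoid given explicitly by multiplication mult and identity e; gen x = x sigma.
  Loop automaton: edge a --x--> mult a (gen x); edge mult a (gen x) --bar x--> a.
  reach mult gen a w = set of end vertices of paths from a labelled w.\<close>
fun reach :: "('m \<Rightarrow> 'm \<Rightarrow> 'm) \<Rightarrow> ('x \<Rightarrow> 'm) \<Rightarrow> 'm \<Rightarrow> 'x hat list \<Rightarrow> 'm set" where
  "reach mult gen a [] = {a}"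
| "reach mult gen a (Pos x # w) = reach mult gen (mult a (gen x)) w"
| "reach mult gen a (Neg x # w) = (\<Union>c\<in>{c. mult c (gen x) = a}. reach mult gen c w)"

definition loop_problem :: "('m \<Rightarrow> 'm \<Rightarrow> 'm) \<Rightarrow> 'm \<Rightarrow> ('x \<Rightarrow> 'm) \<Rightarrow> 'x hat list set" where
  "loop_problem mult e gen = {w. e \<in> reach mult gen e w}"

definition monoid_gens :: "('x list \<Rightarrow> 'm::monoid_mult) \<Rightarrow> bool" where
  "monoid_gens \<sigma> \<longleftrightarrow> \<sigma> [] = 1 \<and> (\<forall>u v. \<sigma> (u @ v) = \<sigma> u * \<sigma> v) \<and> surj \<sigma>"

text \<open>Semigroup choice of generators: surjective semigroup morphism X^+ \<rightarrow> S
  (value on the empty word irrelevant).\<close>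
definition semigroup_gens :: "('x list \<Rightarrow> 's::semigroup_mult) \<Rightarrow> bool" where
  "semigroup_gens \<sigma> \<longleftrightarrow> (\<forall>u v. u \<noteq> [] \<longrightarrow> v \<noteq> [] \<longrightarrow> \<sigma> (u @ v) = \<sigma> u * \<sigma> v)
      \<and> \<sigma> ` {w. w \<noteq> []} = UNIV"

definition L_monoid :: "('x list \<Rightarrow> 'm::monoid_mult) \<Rightarrow> 'x hat list set" where
  "L_monoid \<sigma> = loop_problem (*) 1 (\<lambda>x. \<sigma> [x])"

text \<open>S^1 = S with a new identity None adjoined.\<close>
fun mult1 :: "'s::semigroup_mult option \<Rightarrow> 's option \<Rightarrow> 's option" where
  "mult1 None b = b"
| "mult1 a None = a"
| "mult1 (Some a) (Some b) = Some (a * b)"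

text \<open>L_sigma(S): loop problem of S^1 w.r.t. the extension sigma^1, whose generator images are Some (x sigma).\<close>
definition L_semigroup :: "('x list \<Rightarrow> 's::semigroup_mult) \<Rightarrow> 'x hat list set" where
  "L_semigroup \<sigma> = loop_problem mult1 None (\<lambda>x. Some (\<sigma> [x]))"

end

theory Submission
  imports Defs
begin

text \<open>In the loop automaton, reading \<open>u\<close> from a vertex \<open>a\<close> is deterministic and ends at
  \<open>a(u\<sigma>)\<close>, while the paths labelled \<open>\<overline>v\<close> that end at \<open>b\<close> start exactly at
  the vertices \<open>a\<close> with \<open>a(v\<sigma>) = b\<close>. Hence \<open>u\<overline>v\<close> labels a loop at the identity iff
  \<open>u\<sigma> = v\<sigma>\<close>; no algebraic property of the automaton's multiplication is needed. For a
  semigroup, nonempty words evaluate in \<open>S\<^sup>1\<close> to elements of \<open>S\<close>, so equality there is equality in \<open>S\<close>.\<close>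

definition run :: "('m \<Rightarrow> 'm \<Rightarrow> 'm) \<Rightarrow> ('x \<Rightarrow> 'm) \<Rightarrow> 'm \<Rightarrow> 'x list \<Rightarrow> 'm" where
  "run mult gen a w = foldl (\<lambda>b x. mult b (gen x)) a w"

lemma run_Nil [simp]: "run mult gen a [] = a"
  by (simp add: run_def)

lemma run_Cons [simp]: "run mult gen a (x # w) = run mult gen (mult a (gen x)) w"
  by (simp add: run_def)

lemma run_snoc [simp]: "run mult gen a (w @ [x]) = mult (run mult gen a w) (gen x)"
  by (simp add: run_def)

lemma reach_map_Pos_append:
  "reach mult gen a (map Pos u @ w) = reach mult gen (run mult gen a u) w"
  by (induction u arbitrary: a) auto

lemma bar_snoc: "bar (v @ [x]) = Neg x # bar v"
  by (simp add: bar_def)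

lemma reach_bar: "reach mult gen b (bar v) = {a. run mult gen a v = b}"
proof (induction v arbitrary: b rule: rev_induct)
  case Nil
  then show ?case by (auto simp: bar_def)
next
  case (snoc x v)
  then show ?case by (auto simp: bar_snoc)
qed

lemma Pos_bar_in_loop_problem_iff:
  "map Pos u @ bar v \<in> loop_problem mult e gen \<longleftrightarrow> run mult gen e u = run mult gen e v"
  by (auto simp: loop_problem_def reach_map_Pos_append reach_bar)

lemma run_monoid_hom:
  assumes "\<sigma> [] = 1" and "\<And>u v. \<sigma> (u @ v) = \<sigma> u * \<sigma> v"
  shows "run (*) (\<lambda>x. \<sigma> [x]) 1 w = \<sigma> w"
  by (induction w rule: rev_induct) (simp_all add: assms)

lemma run_mult1_semigroup_hom:
  assumes "\<And>u v. u \<noteq> [] \<Longrightarrow> v \<noteq> [] \<Longrightarrow> \<sigma> (u @ v) = \<sigma> u * \<sigma> v" and "w \<noteq> []"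
  shows "run mult1 (\<lambda>x. Some (\<sigma> [x])) None w = Some (\<sigma> w)"
  using assms(2)
proof (induction w rule: rev_induct)
  case (snoc x w)
  then show ?case by (cases "w = []") (simp_all add: assms(1))
qed simp

lemma semigroup_word_problem_iff_loop:
  assumes "semigroup_gens \<sigma>" and "u \<noteq> []" and "v \<noteq> []"
  shows "\<sigma> u = \<sigma> v \<longleftrightarrow> map Pos u @ bar v \<in> L_semigroup \<sigma>"
proof -
  have hom: "\<And>u v. u \<noteq> [] \<Longrightarrow> v \<noteq> [] \<Longrightarrow> \<sigma> (u @ v) = \<sigma> u * \<sigma> v"
    using assms(1) by (simp add: semigroup_gens_def)
  show ?thesis
    unfolding L_semigroup_def Pos_bar_in_loop_problem_iff
    using run_mult1_semigroup_hom[OF hom] assms(2,3) by simp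
qed

lemma monoid_word_problem_iff_loop:
  assumes "monoid_gens \<sigma>"
  shows "\<sigma> u = \<sigma> v \<longleftrightarrow> map Pos u @ bar v \<in> L_monoid \<sigma>"
proof -
  have "\<sigma> [] = 1" and "\<And>u v. \<sigma> (u @ v) = \<sigma> u * \<sigma> v"
    using assms by (simp_all add: monoid_gens_def)
  then show ?thesis
    unfolding L_monoid_def Pos_bar_in_loop_problem_iff by (simp add: run_monoid_hom)
qed

theorem corollary4p2:
  shows "(\<forall>(\<sigma> :: 'x list \<Rightarrow> 's::semigroup_mult) u v.
            semigroup_gens \<sigma> \<longrightarrow> u \<noteq> [] \<longrightarrow> v \<noteq> [] \<longrightarrow>
            (\<sigma> u = \<sigma> v \<longleftrightarrow> map Pos u @ bar v \<in> L_semigroup \<sigma>))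
       \<and> (\<forall>(\<sigma> :: 'y list \<Rightarrow> 'm::monoid_mult) u v.
            monoid_gens \<sigma> \<longrightarrow>
            (\<sigma> u = \<sigma> v \<longleftrightarrow> map Pos u @ bar v \<in> L_monoid \<sigma>))"
  using semigroup_word_problem_iff_loop monoid_word_problem_iff_loop by blast

end
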